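(* Let $w=(w(m))_{m\in2\mathbb{Z}}\in\ell^2(2\mathbb{Z})$ and $r(m)=\max(|w(m)|,|w(-m)|)$, $m\in2\mathbb{Z}$. For $n\in\mathbb{N}$, $s\ge2$ and $m\in n+2\mathbb{Z}$ define $$\sigma_2(n,s;m)=\sum_{j_1,\dots,j_s\neq\pm n}r(m+j_1)\,\frac{r(j_1+j_2)}{|n+j_2|}\cdots\frac{r(j_{s-2}+j_{s-1})}{|n+j_{s-1}|}\cdot\frac{r(j_{s-1}+j_s)}{|n^2-j_s^2|}$$ (for $s=2$ this is $\sum_{j_1,j_2\neq\pm n}r(m+j_1)\frac{r(j_1+j_2)}{|n^2-j_2^2|}$), where $j_1,\dots,j_s$ range over $n+2\mathbb{Z}\setminus\{n,-n\}$, and for $s\in\mathbb{N}$, $k\in n+2\mathbb{Z}$, $$\sigma_1(n,s;k)=\sum_{j_1,\dots,j_s\neq n}\frac{r(k+j_1)}{|n-j_1|}\cdot\frac{r(j_1+j_2)}{|n-j_2|}\cdots\frac{r(j_{s-1}+j_s)}{|n-j_s|}$$ with indices in $n+2\mathbb{Z}\setminus\{n\}$. Then $$\sigma_2(n,2;m)\le\|r\|^2\cdot\frac{2\log 6n}{n},$$ and for $s\ge3$, $$\sigma_2(n,s;m)\le\|r\|^2\cdot\frac{2\log 6n}{n}\cdot\sup_k\sigma_1(n,s-2;k).$$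
   Context: $\|r\|$ denotes the $\ell^2(2\mathbb{Z})$ norm of $r$; note $r(-m)=r(m)\ge0$. *)

theory Defs
  imports "HOL-Analysis.Analysis"
begin

text \<open>Sequences indexed by 2Z are modelled as functions int => complex; only values at even
  arguments matter.  r(m) = max(|w(m)|, |w(-m)|).\<close>
definition rr :: "(int \<Rightarrow> complex) \<Rightarrow> int \<Rightarrow> real" where
  "rr w m = max (cmod (w m)) (cmod (w (- m)))"

definition l2sq :: "(int \<Rightarrow> complex) \<Rightarrow> ennreal" where
  "l2sq w = (\<Sum>\<^sub>\<infinity> m \<in> {m::int. even m}. ennreal ((rr w m)\<^sup>2))"

text \<open>Index tuples (j_1,...,j_s) are lists js of length s, js!0 = j_1.\<close>
definition sigma2 :: "(int \<Rightarrow> complex) \<Rightarrow> nat \<Rightarrow> nat \<Rightarrow> int \<Rightarrow> ennreal" where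
  "sigma2 w n s m =
    (\<Sum>\<^sub>\<infinity> js \<in> {js. length js = s \<and>
                    (\<forall>j\<in>set js. even (j - int n) \<and> j \<noteq> int n \<and> j \<noteq> - int n)}.
       ennreal (rr w (m + js!0)
         * (\<Prod>i\<in>{1..<s-1}. rr w (js!(i-1) + js!i) / \<bar>real_of_int (int n + js!i)\<bar>)
         * (rr w (js!(s-2) + js!(s-1)) / \<bar>real_of_int (int n ^ 2 - (js!(s-1)) ^ 2)\<bar>)))"

definition sigma1 :: "(int \<Rightarrow> complex) \<Rightarrow> nat \<Rightarrow> nat \<Rightarrow> int \<Rightarrow> ennreal" where
  "sigma1 w n s k =
    (\<Sum>\<^sub>\<infinity> js \<in> {js. length js = s \<and> (\<forall>j\<in>set js. even (j - int n) \<and> j \<noteq> int n)}.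
       ennreal (\<Prod>i<s. rr w ((if i = 0 then k else js!(i-1)) + js!i)
                         / \<bar>real_of_int (int n - js!i)\<bar>))"

end

theory Submission
  imports Defs
begin

text \<open>Write an index list of \<open>\<sigma>\<^sub>2(n, s; m)\<close> as \<open>j # ys @ [k]\<close>. Regrouping each denominator
  \<open>|n + j\<^sub>i|\<close> with the following numerator \<open>r(j\<^sub>i + j\<^sub>i\<^sub>+\<^sub>1)\<close>, the summand becomes
  \<open>r(m + j) r(j + j\<^sub>2)\<close> times a weight of \<open>(ys, k)\<close> divided by \<open>|n\<^sup>2 - k\<^sup>2|\<close>.
  For fixed \<open>(ys, k)\<close> the sum over \<open>j\<close> is at most \<open>\<parallel>r\<parallel>\<^sup>2\<close> by AM-GM, as both shifts
  \<open>m + j\<close> and \<open>j + j\<^sub>2\<close> run injectively through \<open>2\<int>\<close>. Since \<open>r\<close> is even, reversing and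
  negating \<open>ys\<close> turns the weight into a summand of \<open>\<sigma>\<^sub>1(n, s - 2; -k)\<close>. Finally, partial
  fractions give \<open>\<Sum>\<^sub>k 1/|n\<^sup>2 - k\<^sup>2| \<le> H\<^sub>n/n \<le> 2 log(6n)/n\<close>.
  All sums are taken in \<open>ennreal\<close>.\<close>

text \<open>The library fact \<open>summable_on_ennreal\<close> only covers \<open>ennreal_of_enat\<close>-valued sums.\<close>
lemma summable_on_ennreal_valued [simp]: "(f :: 'a \<Rightarrow> ennreal) summable_on A"
  by (simp add: nonneg_summable_on_complete)

lemma infsum_mono_set_ennreal:
  fixes f :: "'a \<Rightarrow> ennreal"
  assumes "A \<subseteq> B"
  shows "infsum f A \<le> infsum f B"
  by (rule infsum_mono_neutral) (use assms in auto)

lemma sum_le_infsum_ennreal: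
  fixes f :: "'a \<Rightarrow> ennreal"
  assumes "finite F" "F \<subseteq> A"
  shows "sum f F \<le> infsum f A"
  using infsum_mono_set_ennreal[OF assms(2), of f] assms(1) by simp

lemma infsum_Un_le_ennreal:
  fixes f :: "'a \<Rightarrow> ennreal"
  shows "infsum f (A \<union> B) \<le> infsum f A + infsum f B"
proof -
  have "infsum f (A \<union> B) = infsum f A + infsum f (B - A)"
    using infsum_Un_disjoint[of f A "B - A"] by simp
  also have "\<dots> \<le> infsum f A + infsum f B"
    by (intro add_left_mono infsum_mono_set_ennreal) auto
  finally show ?thesis .
qed

lemma infsum_cmult_left_le_ennreal:
  fixes f :: "'a \<Rightarrow> ennreal"
  shows "infsum (\<lambda>x. f x * c) A \<le> infsum f A * c"
proof (rule infsum_le_finite_sums)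
  fix F assume "finite F" "F \<subseteq> A"
  then have "sum f F * c \<le> infsum f A * c"
    by (intro mult_right_mono sum_le_infsum_ennreal) auto
  then show "sum (\<lambda>x. f x * c) F \<le> infsum f A * c"
    by (simp add: sum_distrib_right)
qed simp

lemma infsum_Sigma_le_ennreal:
  fixes f :: "'a \<times> 'b \<Rightarrow> ennreal"
  shows "infsum f (Sigma A B) \<le> infsum (\<lambda>x. infsum (\<lambda>y. f (x, y)) (B x)) A"
proof (rule infsum_le_finite_sums)
  fix F assume F: "finite F" "F \<subseteq> Sigma A B"
  define G where "G x = {y. (x, y) \<in> F}" for x
  have F_eq: "F = Sigma (fst ` F) G"
    unfolding G_def by force
  have finite_G: "finite (G x)" for x
    using F(1) finite_subset[of "G x" "snd ` F"] unfolding G_def by force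
  have "sum f F = (\<Sum>x\<in>fst ` F. \<Sum>y\<in>G x. f (x, y))"
    using F(1) finite_G by (subst F_eq, subst sum.Sigma) auto
  also have "\<dots> \<le> (\<Sum>x\<in>fst ` F. infsum (\<lambda>y. f (x, y)) (B x))"
    by (intro sum_mono sum_le_infsum_ennreal finite_G) (use F in \<open>auto simp: G_def\<close>)
  also have "\<dots> \<le> infsum (\<lambda>x. infsum (\<lambda>y. f (x, y)) (B x)) A"
    by (rule sum_le_infsum_ennreal) (use F in auto)
  finally show "sum f F \<le> infsum (\<lambda>x. infsum (\<lambda>y. f (x, y)) (B x)) A" .
qed simp

lemma infsum_nat_ennreal_le:
  fixes f :: "nat \<Rightarrow> real"
  assumes "\<And>u. f u \<ge> 0" and "\<And>N. (\<Sum>u<N. f u) \<le> b"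
  shows "infsum (\<lambda>u. ennreal (f u)) UNIV \<le> ennreal b"
proof (rule infsum_le_finite_sums)
  fix F :: "nat set" assume "finite F"
  then obtain N where "F \<subseteq> {..<N}"
    using finite_nat_bounded by blast
  then have "sum (\<lambda>u. ennreal (f u)) F \<le> (\<Sum>u<N. ennreal (f u))"
    by (intro sum_mono2) auto
  also have "\<dots> = ennreal (\<Sum>u<N. f u)"
    using assms(1) by (simp add: sum_ennreal)
  also have "\<dots> \<le> ennreal b"
    using assms(2) by (rule ennreal_leI)
  finally show "sum (\<lambda>u. ennreal (f u)) F \<le> ennreal b" .
qed simp

lemma harm_le_ln_plus_one:
  assumes "n \<ge> 1"
  shows "harm n \<le> ln (real n) + (1::real)"
  using euler_mascheroni_sequence_decreasing[of 1 n] assms by (simp add: harm_def)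

lemma harm_div_le_log_bound:
  assumes "n \<ge> 1"
  shows "harm n / real n \<le> 2 * ln (6 * real n) / real n"
proof (rule divide_right_mono)
  have "exp 1 \<le> (6::real)"
    using exp_le by simp
  then have "ln (6::real) \<ge> 1"
    using ln_le_cancel_iff[of "exp 1" 6] by simp
  moreover have "ln (6 * real n) = ln 6 + ln (real n)" and "ln (real n) \<ge> 0"
    using assms by (simp_all add: ln_mult)
  ultimately show "harm n \<le> 2 * ln (6 * real n)"
    using harm_le_ln_plus_one[OF assms] by linarith
qed simp

lemma sum_inverse_shifted_eq_harm_diff:
  "(\<Sum>u<N. 1 / (real n + real u + 1)) = harm (n + N) - harm n"
proof (induction N)
  case (Suc N)
  have "harm (n + Suc N) = harm (n + N) + 1 / (real n + real N + 1)"
    by (simp add: harm_Suc inverse_eq_divide add_ac)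
  with Suc show ?case by simp
qed simp

text \<open>The partial fraction \<open>1/((u+1)(n+u+1)) = (1/(u+1) - 1/(n+u+1))/n\<close> telescopes with lag \<open>n\<close>.\<close>
lemma sum_inverse_tail_products_le:
  assumes "n \<ge> 1"
  shows "(\<Sum>u<N. 1 / (4 * ((real u + 1) * (real n + real u + 1)))) \<le> harm n / (4 * real n)"
proof -
  have partial_fraction: "1 / (4 * ((real u + 1) * (real n + real u + 1)))
     = (1 / (real u + 1) - 1 / (real n + real u + 1)) / (4 * real n)" for u
    using assms by (simp add: divide_simps)
  have "(\<Sum>u<N. 1 / (4 * ((real u + 1) * (real n + real u + 1))))
      = ((\<Sum>u<N. 1 / (real u + 1)) - (\<Sum>u<N. 1 / (real n + real u + 1))) / (4 * real n)"
    unfolding partial_fraction by (simp add: sum_divide_distrib[symmetric] sum_subtractf)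
  also have "\<dots> = (harm N - harm (n + N) + harm n) / (4 * real n)"
  proof -
    have "(\<Sum>u<N. 1 / (real u + 1)) = harm N"
      by (simp add: harm_altdef field_simps)
    then show ?thesis by (simp add: sum_inverse_shifted_eq_harm_diff)
  qed
  also have "\<dots> \<le> harm n / (4 * real n)"
    using harm_mono[of N "n + N", where 'a=real] by (intro divide_right_mono) auto
  finally show ?thesis .
qed

lemma sum_inverse_complementary_products_le:
  assumes "n \<ge> 1"
  shows "(\<Sum>u\<in>{1..<n}. 1 / (4 * (real u * (real n - real u)))) \<le> harm n / (2 * real n)"
proof -
  have partial_fraction: "1 / (4 * (real u * (real n - real u)))
     = (1 / real u + 1 / (real n - real u)) / (4 * real n)" if "u \<in> {1..<n}" for u
    using that by (simp add: field_simps)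
  have reflect: "(\<Sum>u\<in>{1..<n}. 1 / (real n - real u)) = (\<Sum>u\<in>{1..<n}. 1 / real u)"
    by (rule sum.reindex_bij_witness[where i="\<lambda>u. n - u" and j="\<lambda>u. n - u"]) auto
  have "(\<Sum>u\<in>{1..<n}. 1 / real u) \<le> (\<Sum>u\<in>{1..n}. 1 / real u)"
    by (rule sum_mono2) auto
  then have le_harm: "(\<Sum>u\<in>{1..<n}. 1 / real u) \<le> harm n"
    unfolding harm_def by (simp add: inverse_eq_divide)
  have "(\<Sum>u\<in>{1..<n}. 1 / (4 * (real u * (real n - real u))))
      = ((\<Sum>u\<in>{1..<n}. 1 / real u) + (\<Sum>u\<in>{1..<n}. 1 / (real n - real u))) / (4 * real n)"
    by (simp only: sum.cong[OF refl partial_fraction] sum_divide_distrib[symmetric] sum.distrib)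
  also have "\<dots> \<le> (harm n + harm n) / (4 * real n)"
    using le_harm reflect by (intro divide_right_mono) auto
  finally show ?thesis by simp
qed

definition sigma2_index_set :: "nat \<Rightarrow> int set" where
  "sigma2_index_set n = {j. even (j - int n) \<and> j \<noteq> int n \<and> j \<noteq> - int n}"

lemma sigma2_index_set_subset:
  "sigma2_index_set n \<subseteq> range (\<lambda>u. int n + 2 + 2 * int u) \<union> uminus ` range (\<lambda>u. int n + 2 + 2 * int u)
     \<union> (\<lambda>u. int n - 2 * int u) ` {1..<n}"
proof
  fix k assume "k \<in> sigma2_index_set n"
  then have "even (k - int n)" "k \<noteq> int n" "k \<noteq> - int n"
    unfolding sigma2_index_set_def by auto
  moreover from this(1) obtain d where d: "k - int n = 2 * d"
    by (rule evenE)
  ultimately consider "d > 0" | "d < - int n" | "- int n < d \<and> d < 0"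
    by linarith
  then show "k \<in> range (\<lambda>u. int n + 2 + 2 * int u) \<union> uminus ` range (\<lambda>u. int n + 2 + 2 * int u)
     \<union> (\<lambda>u. int n - 2 * int u) ` {1..<n}"
  proof cases
    case 1
    then have "k = int n + 2 + 2 * int (nat (d - 1))"
      using d by simp
    then show ?thesis by blast
  next
    case 2
    then have "k = - (int n + 2 + 2 * int (nat (- d - int n - 1)))"
      using d by simp
    then show ?thesis by blast
  next
    case 3
    then have "k = int n - 2 * int (nat (- d))" "nat (- d) \<in> {1..<n}"
      using d by auto
    then show ?thesis by blast
  qed
qed

lemma infsum_inverse_sq_diff_above_le:
  assumes "n \<ge> 1"
  shows "(\<Sum>\<^sub>\<infinity>k\<in>range (\<lambda>u. int n + 2 + 2 * int u). ennreal (1 / \<bar>real_of_int (int n ^ 2 - k ^ 2)\<bar>))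
         \<le> ennreal (harm n / (4 * real n))"
proof -
  have "real_of_int (int n ^ 2 - (int n + 2 + 2 * int u) ^ 2)
      = - (4 * ((real u + 1) * (real n + real u + 1)))" for u :: nat
    by (simp add: algebra_simps power2_eq_square)
  moreover have "inj (\<lambda>u. int n + 2 + 2 * int u)"
    by (auto simp: inj_on_def)
  ultimately show ?thesis
    using infsum_nat_ennreal_le[OF _ sum_inverse_tail_products_le[OF assms]]
    by (simp add: infsum_reindex o_def)
qed

lemma infsum_inverse_sq_diff_between_le:
  assumes "n \<ge> 1"
  shows "(\<Sum>\<^sub>\<infinity>k\<in>(\<lambda>u. int n - 2 * int u) ` {1..<n}. ennreal (1 / \<bar>real_of_int (int n ^ 2 - k ^ 2)\<bar>))
         \<le> ennreal (harm n / (2 * real n))"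
proof -
  have inj: "inj_on (\<lambda>u. int n - 2 * int u) {1..<n}"
    by (auto simp: inj_on_def)
  define f where "f k = ennreal (1 / \<bar>real_of_int (int n ^ 2 - k ^ 2)\<bar>)" for k :: int
  have factor: "real_of_int (int n ^ 2 - (int n - 2 * int u) ^ 2) = 4 * (real u * (real n - real u))" for u
    by (simp add: algebra_simps power2_eq_square)
  have "(\<Sum>\<^sub>\<infinity>k\<in>(\<lambda>u. int n - 2 * int u) ` {1..<n}. f k) = (\<Sum>u\<in>{1..<n}. f (int n - 2 * int u))"
    using sum.reindex[OF inj, of f] by simp
  also have "\<dots> = (\<Sum>u\<in>{1..<n}. ennreal (1 / (4 * (real u * (real n - real u)))))"
  proof (rule sum.cong)
    fix u assume "u \<in> {1..<n}"
    then have "0 \<le> 4 * (real u * (real n - real u))"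
      by simp
    then show "f (int n - 2 * int u) = ennreal (1 / (4 * (real u * (real n - real u))))"
      unfolding f_def factor by simp
  qed simp
  also have "\<dots> = ennreal (\<Sum>u\<in>{1..<n}. 1 / (4 * (real u * (real n - real u))))"
    by (rule sum_ennreal) auto
  also have "\<dots> \<le> ennreal (harm n / (2 * real n))"
    using sum_inverse_complementary_products_le[OF assms] by (rule ennreal_leI)
  finally show ?thesis
    unfolding f_def .
qed

text \<open>The parts of \<open>n + 2\<int>\<close> above \<open>n\<close>, below \<open>-n\<close> and strictly between \<open>-n\<close> and \<open>n\<close>,
  the first two of equal contribution since the summand is even in \<open>k\<close>.\<close>
lemma infsum_inverse_sq_diff_le:
  assumes "n \<ge> 1"
  shows "(\<Sum>\<^sub>\<infinity>k\<in>sigma2_index_set n. ennreal (1 / \<bar>real_of_int (int n ^ 2 - k ^ 2)\<bar>))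
         \<le> ennreal (harm n / real n)"
proof -
  define g where "g k = ennreal (1 / \<bar>real_of_int (int n ^ 2 - k ^ 2)\<bar>)" for k :: int
  define Above where "Above = range (\<lambda>u. int n + 2 + 2 * int u)"
  define Between where "Between = (\<lambda>u. int n - 2 * int u) ` {1..<n}"
  have "g \<circ> uminus = g"
    unfolding g_def by (simp add: fun_eq_iff)
  then have below: "infsum g (uminus ` Above) = infsum g Above"
    by (simp add: infsum_reindex inj_on_def)
  have "infsum g (sigma2_index_set n) \<le> infsum g (Above \<union> uminus ` Above \<union> Between)"
    using sigma2_index_set_subset unfolding Above_def Between_def by (rule infsum_mono_set_ennreal)
  also have "\<dots> \<le> infsum g Above + infsum g (uminus ` Above) + infsum g Between"
    by (meson add_right_mono infsum_Un_le_ennreal order_trans)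
  also have "\<dots> \<le> ennreal (harm n / (4 * real n)) + ennreal (harm n / (4 * real n))
                    + ennreal (harm n / (2 * real n))"
    unfolding below unfolding g_def Above_def Between_def
    by (intro add_mono infsum_inverse_sq_diff_above_le infsum_inverse_sq_diff_between_le assms)
  also have "\<dots> = ennreal (harm n / real n)"
    by (simp add: ennreal_plus[symmetric] harm_nonneg del: ennreal_plus)
  finally show ?thesis
    unfolding g_def .
qed

lemma rr_nonneg: "rr w x \<ge> 0"
  unfolding rr_def by (simp add: le_max_iff_disj)

lemma rr_uminus: "rr w (- x) = rr w x"
  unfolding rr_def by auto

lemma infsum_rr_sq_shift_le_l2sq:
  assumes "\<And>j. j \<in> A \<Longrightarrow> even (a + j)"
  shows "(\<Sum>\<^sub>\<infinity>j\<in>A. ennreal ((rr w (a + j))\<^sup>2)) \<le> l2sq w"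
proof -
  have "(\<Sum>\<^sub>\<infinity>j\<in>A. ennreal ((rr w (a + j))\<^sup>2)) = (\<Sum>\<^sub>\<infinity>x\<in>(+) a ` A. ennreal ((rr w x)\<^sup>2))"
    by (simp add: infsum_reindex inj_on_def o_def)
  also have "\<dots> \<le> l2sq w"
    unfolding l2sq_def by (rule infsum_mono_set_ennreal) (use assms in auto)
  finally show ?thesis .
qed

lemma infsum_rr_mult_shift_le_l2sq:
  assumes "\<And>j. j \<in> A \<Longrightarrow> even (a + j) \<and> even (j + b)"
  shows "(\<Sum>\<^sub>\<infinity>j\<in>A. ennreal (rr w (a + j) * rr w (j + b))) \<le> l2sq w"
proof -
  define half where "half = ennreal (1 / 2)"
  have halves: "half + half = 1"
    unfolding half_def by (subst ennreal_plus[symmetric]) auto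
  have scale: "ennreal (t / 2) = ennreal t * half" if "t \<ge> 0" for t
    unfolding half_def using that by (simp add: ennreal_mult[symmetric] del: ennreal_half)
  have am_gm: "ennreal (rr w (a + j) * rr w (j + b))
      \<le> ennreal ((rr w (a + j))\<^sup>2) * half + ennreal ((rr w (b + j))\<^sup>2) * half" for j
  proof -
    have "ennreal (rr w (a + j) * rr w (j + b))
        \<le> ennreal ((rr w (a + j))\<^sup>2 / 2 + (rr w (b + j))\<^sup>2 / 2)"
      using sum_squares_bound[of "rr w (a + j)" "rr w (j + b)"]
      by (intro ennreal_leI) (simp add: add.commute)
    also have "\<dots> = ennreal ((rr w (a + j))\<^sup>2 / 2) + ennreal ((rr w (b + j))\<^sup>2 / 2)"
      by (rule ennreal_plus) auto
    finally show ?thesis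
      by (simp only: scale zero_le_power2)
  qed
  have "(\<Sum>\<^sub>\<infinity>j\<in>A. ennreal (rr w (a + j) * rr w (j + b)))
      \<le> (\<Sum>\<^sub>\<infinity>j\<in>A. ennreal ((rr w (a + j))\<^sup>2) * half + ennreal ((rr w (b + j))\<^sup>2) * half)"
    by (intro infsum_mono am_gm) simp_all
  also have "\<dots> = (\<Sum>\<^sub>\<infinity>j\<in>A. ennreal ((rr w (a + j))\<^sup>2) * half)
                + (\<Sum>\<^sub>\<infinity>j\<in>A. ennreal ((rr w (b + j))\<^sup>2) * half)"
    by (simp add: infsum_add)
  also have "\<dots> \<le> (\<Sum>\<^sub>\<infinity>j\<in>A. ennreal ((rr w (a + j))\<^sup>2)) * half
                + (\<Sum>\<^sub>\<infinity>j\<in>A. ennreal ((rr w (b + j))\<^sup>2)) * half"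
    by (intro add_mono infsum_cmult_left_le_ennreal)
  also have "\<dots> \<le> l2sq w * half + l2sq w * half"
    using assms
    by (intro add_mono mult_right_mono infsum_rr_sq_shift_le_l2sq) (auto simp: add.commute[of b])
  also have "\<dots> = l2sq w"
    by (simp add: distrib_left[symmetric] halves)
  finally show ?thesis .
qed

lemma infsum_sigma2_index_set_rr_mult_le_l2sq:
  assumes "even (m - int n)" and "even (q - int n)"
  shows "(\<Sum>\<^sub>\<infinity>j\<in>sigma2_index_set n. ennreal (rr w (m + j) * rr w (j + q))) \<le> l2sq w"
  by (rule infsum_rr_mult_shift_le_l2sq) (use assms in \<open>auto simp: sigma2_index_set_def\<close>)

definition sigma2_index_lists :: "nat \<Rightarrow> nat \<Rightarrow> int list set" where
  "sigma2_index_lists n c = {js. length js = c \<and> set js \<subseteq> sigma2_index_set n}"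

lemma bij_betw_cons_snoc:
  "bij_betw (\<lambda>((k, ys), j). j # ys @ [k]) ((A \<times> {ys. length ys = c \<and> set ys \<subseteq> A}) \<times> A)
     {js. length js = Suc (Suc c) \<and> set js \<subseteq> A}"
proof (rule bij_betw_byWitness[where f'="\<lambda>js. ((last js, butlast (tl js)), hd js)"])
  show "\<forall>js\<in>{js. length js = Suc (Suc c) \<and> set js \<subseteq> A}.
      (\<lambda>((k, ys), j). j # ys @ [k]) ((last js, butlast (tl js)), hd js) = js"
  proof
    fix js assume "js \<in> {js. length js = Suc (Suc c) \<and> set js \<subseteq> A}"
    then obtain j zs where "js = j # zs" "zs \<noteq> []"
      by (auto simp: length_Suc_conv)
    then show "(\<lambda>((k, ys), j). j # ys @ [k]) ((last js, butlast (tl js)), hd js) = js"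
      by simp
  qed
  show "(\<lambda>js. ((last js, butlast (tl js)), hd js)) ` {js. length js = Suc (Suc c) \<and> set js \<subseteq> A}
      \<subseteq> (A \<times> {ys. length ys = c \<and> set ys \<subseteq> A}) \<times> A"
    by (auto simp: length_Suc_conv dest!: in_set_butlastD)
qed auto

text \<open>The factors of the \<open>\<sigma>\<^sub>2\<close>-summand between \<open>r(j\<^sub>1 + j\<^sub>2)\<close> and \<open>1/|n\<^sup>2 - j\<^sub>s\<^sup>2|\<close>,
  where \<open>ys @ [k] = [j\<^sub>2, \<dots>, j\<^sub>s]\<close>, each \<open>1/|n + j\<^sub>i|\<close> paired with \<open>r(j\<^sub>i + j\<^sub>i\<^sub>+\<^sub>1)\<close>.\<close>
definition chain_weight :: "(int \<Rightarrow> complex) \<Rightarrow> nat \<Rightarrow> int list \<Rightarrow> int \<Rightarrow> real" where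
  "chain_weight w n ys k =
    (\<Prod>p<length ys. rr w ((ys @ [k]) ! p + (ys @ [k]) ! Suc p) / \<bar>real_of_int (int n + (ys @ [k]) ! p)\<bar>)"

lemma chain_weight_nonneg: "chain_weight w n ys k \<ge> 0"
  unfolding chain_weight_def by (intro prod_nonneg divide_nonneg_nonneg rr_nonneg) auto

lemma sigma2_summand_cons_snoc:
  assumes "length ys = c"
  shows "rr w (m + (j # ys @ [k]) ! 0)
         * (\<Prod>i\<in>{1..<Suc c}. rr w ((j # ys @ [k]) ! (i - 1) + (j # ys @ [k]) ! i)
                               / \<bar>real_of_int (int n + (j # ys @ [k]) ! i)\<bar>)
         * (rr w ((j # ys @ [k]) ! c + (j # ys @ [k]) ! Suc c)
            / \<bar>real_of_int (int n ^ 2 - ((j # ys @ [k]) ! Suc c) ^ 2)\<bar>)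
       = (rr w (m + j) * rr w (j + (ys @ [k]) ! 0))
         * (chain_weight w n ys k / \<bar>real_of_int (int n ^ 2 - k ^ 2)\<bar>)"
proof -
  define zs where "zs = ys @ [k]"
  define js where "js = j # zs"
  define h where "h p = rr w (js ! p + js ! Suc p)" for p
  define D where "D p = \<bar>real_of_int (int n + zs ! p)\<bar>" for p
  have js_Suc: "js ! Suc i = zs ! i" for i
    unfolding js_def by simp
  have zs_c: "zs ! c = k"
    unfolding zs_def assms[symmetric] by simp
  have middle: "(\<Prod>i\<in>{1..<Suc c}. rr w (js ! (i - 1) + js ! i) / \<bar>real_of_int (int n + js ! i)\<bar>)
          = (\<Prod>p<c. h p / D p)"
    using prod.shift_bounds_Suc_ivl[of "\<lambda>i. rr w (js ! (i - 1) + js ! i) / \<bar>real_of_int (int n + js ! i)\<bar>" 0 c]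
    by (simp add: atLeast0LessThan h_def D_def js_Suc)
  have shift: "(\<Prod>p<c. h p) * h c = h 0 * (\<Prod>p<c. h (Suc p))"
    by (metis prod.lessThan_Suc prod.lessThan_Suc_shift)
  have weight: "chain_weight w n ys k = (\<Prod>p<c. h (Suc p) / D p)"
    unfolding chain_weight_def h_def D_def using assms by (simp add: zs_def js_Suc)
  have "rr w (m + js ! 0)
         * (\<Prod>i\<in>{1..<Suc c}. rr w (js ! (i - 1) + js ! i) / \<bar>real_of_int (int n + js ! i)\<bar>)
         * (rr w (js ! c + js ! Suc c) / \<bar>real_of_int (int n ^ 2 - (js ! Suc c) ^ 2)\<bar>)
      = rr w (m + j) * ((\<Prod>p<c. h p) * h c) / ((\<Prod>p<c. D p) * \<bar>real_of_int (int n ^ 2 - k ^ 2)\<bar>)"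
    unfolding middle js_Suc zs_c by (simp add: js_def h_def zs_c prod_dividef)
  also have "\<dots> = (rr w (m + j) * rr w (j + zs ! 0)) * (chain_weight w n ys k / \<bar>real_of_int (int n ^ 2 - k ^ 2)\<bar>)"
    unfolding shift weight by (simp add: prod_dividef h_def js_def)
  finally show ?thesis
    unfolding js_def zs_def .
qed

lemma sigma2_Suc_Suc_eq:
  "sigma2 w n (Suc (Suc c)) m =
    infsum (\<lambda>((k, ys), j). ennreal (rr w (m + j) * rr w (j + (ys @ [k]) ! 0))
              * (ennreal (chain_weight w n ys k) * ennreal (1 / \<bar>real_of_int (int n ^ 2 - k ^ 2)\<bar>)))
      ((sigma2_index_set n \<times> sigma2_index_lists n c) \<times> sigma2_index_set n)"
proof -
  define F where "F js = ennreal (rr w (m + js ! 0)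
         * (\<Prod>i\<in>{1..<Suc c}. rr w (js ! (i - 1) + js ! i) / \<bar>real_of_int (int n + js ! i)\<bar>)
         * (rr w (js ! c + js ! Suc c) / \<bar>real_of_int (int n ^ 2 - (js ! Suc c) ^ 2)\<bar>))" for js
  have "sigma2 w n (Suc (Suc c)) m
      = infsum F {js. length js = Suc (Suc c) \<and> set js \<subseteq> sigma2_index_set n}"
  proof -
    have "{js. length js = Suc (Suc c) \<and> (\<forall>j\<in>set js. even (j - int n) \<and> j \<noteq> int n \<and> j \<noteq> - int n)}
        = {js. length js = Suc (Suc c) \<and> set js \<subseteq> sigma2_index_set n}"
      by (auto simp: sigma2_index_set_def)
    moreover have "Suc (Suc c) - 1 = Suc c" "Suc (Suc c) - 2 = c"
      by simp_all
    ultimately show ?thesis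
      unfolding sigma2_def F_def by (simp only:)
  qed
  also have "\<dots> = infsum (\<lambda>((k, ys), j). F (j # ys @ [k]))
      ((sigma2_index_set n \<times> sigma2_index_lists n c) \<times> sigma2_index_set n)"
    using infsum_reindex_bij_betw[OF bij_betw_cons_snoc, of F "sigma2_index_set n" c, symmetric]
    by (simp add: sigma2_index_lists_def case_prod_beta')
  also have "\<dots> = infsum (\<lambda>((k, ys), j). ennreal (rr w (m + j) * rr w (j + (ys @ [k]) ! 0))
              * (ennreal (chain_weight w n ys k) * ennreal (1 / \<bar>real_of_int (int n ^ 2 - k ^ 2)\<bar>)))
      ((sigma2_index_set n \<times> sigma2_index_lists n c) \<times> sigma2_index_set n)"
  proof (rule infsum_cong, clarify)
    fix k ys j assume "ys \<in> sigma2_index_lists n c"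
    then have len: "length ys = c"
      by (simp add: sigma2_index_lists_def)
    show "F (j # ys @ [k]) = ennreal (rr w (m + j) * rr w (j + (ys @ [k]) ! 0))
              * (ennreal (chain_weight w n ys k) * ennreal (1 / \<bar>real_of_int (int n ^ 2 - k ^ 2)\<bar>))"
      unfolding F_def sigma2_summand_cons_snoc[OF len]
      by (simp add: ennreal_mult[symmetric] rr_nonneg chain_weight_nonneg divide_inverse)
  qed
  finally show ?thesis .
qed

definition sigma1_term :: "(int \<Rightarrow> complex) \<Rightarrow> nat \<Rightarrow> nat \<Rightarrow> int \<Rightarrow> int list \<Rightarrow> real" where
  "sigma1_term w n s k js =
    (\<Prod>i<s. rr w ((if i = 0 then k else js ! (i - 1)) + js ! i) / \<bar>real_of_int (int n - js ! i)\<bar>)"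

lemma chain_weight_eq_sigma1_term:
  assumes "length ys = c"
  shows "chain_weight w n ys k = sigma1_term w n c (- k) (map uminus (rev ys))"
proof -
  define zs where "zs = map uminus (rev ys)"
  define g where "g i = rr w ((if i = 0 then - k else zs ! (i - 1)) + zs ! i) / \<bar>real_of_int (int n - zs ! i)\<bar>" for i
  define f where "f p = rr w ((ys @ [k]) ! p + (ys @ [k]) ! Suc p) / \<bar>real_of_int (int n + (ys @ [k]) ! p)\<bar>" for p
  have "(\<Prod>p<c. f p) = (\<Prod>i<c. g i)"
  proof (rule prod.reindex_bij_witness[where i="\<lambda>p. c - 1 - p" and j="\<lambda>p. c - 1 - p"])
    fix p assume "p \<in> {..<c}"
    then have p: "p < c" by simp
    have zs_rev: "zs ! (c - 1 - p) = - (ys ! p)"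
      unfolding zs_def using p assms by (simp add: rev_nth)
    have ys_p: "(ys @ [k]) ! p = ys ! p"
      using p assms by (simp add: nth_append)
    show "g (c - 1 - p) = f p"
    proof (cases "p = c - 1")
      case True
      then have "(ys @ [k]) ! Suc p = k" and "c - 1 - p = 0"
        using p assms by (simp_all add: nth_append)
      then show ?thesis
        unfolding g_def f_def using zs_rev ys_p rr_uminus[of w "k + ys ! p"]
        by (simp add: add.commute)
    next
      case False
      then have "(ys @ [k]) ! Suc p = ys ! Suc p" and "zs ! (c - 1 - p - 1) = - (ys ! Suc p)"
          and "c - 1 - p \<noteq> 0"
        using p assms by (auto simp: nth_append zs_def rev_nth)
      then show ?thesis
        unfolding g_def f_def using zs_rev ys_p rr_uminus[of w "ys ! Suc p + ys ! p"]
        by (simp add: add.commute)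
    qed
  qed auto
  then show ?thesis
    unfolding chain_weight_def sigma1_term_def assms f_def g_def zs_def by simp
qed

lemma infsum_chain_weight_le_sigma1:
  "(\<Sum>\<^sub>\<infinity>ys\<in>sigma2_index_lists n c. ennreal (chain_weight w n ys k)) \<le> sigma1 w n c (- k)"
proof -
  define B where "B = {js. length js = c \<and> (\<forall>j\<in>set js. even (j - int n) \<and> j \<noteq> int n)}"
  define f where "f zs = ennreal (sigma1_term w n c (- k) zs)" for zs
  have inj: "inj_on (\<lambda>ys. map uminus (rev ys)) (sigma2_index_lists n c)"
    by (intro inj_onI) (simp add: inj_def map_injective)
  have "(\<Sum>\<^sub>\<infinity>ys\<in>sigma2_index_lists n c. ennreal (chain_weight w n ys k))
      = (\<Sum>\<^sub>\<infinity>ys\<in>sigma2_index_lists n c. f (map uminus (rev ys)))"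
    by (rule infsum_cong) (simp add: f_def chain_weight_eq_sigma1_term sigma2_index_lists_def)
  also have "\<dots> = infsum f ((\<lambda>ys. map uminus (rev ys)) ` sigma2_index_lists n c)"
    using infsum_reindex[OF inj, of f] by (simp add: o_def)
  also have "\<dots> \<le> infsum f B"
    by (intro infsum_mono_set_ennreal image_subsetI)
      (force simp: B_def sigma2_index_lists_def sigma2_index_set_def subset_iff)
  also have "\<dots> = sigma1 w n c (- k)"
    unfolding sigma1_def f_def sigma1_term_def B_def ..
  finally show ?thesis .
qed

lemma sigma1_0: "sigma1 w n 0 k = 1"
proof -
  have "{js :: int list. length js = 0 \<and> (\<forall>j\<in>set js. even (j - int n) \<and> j \<noteq> int n)} = {[]}"
    by auto
  then show ?thesis
    unfolding sigma1_def by simp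
qed

lemma sigma2_Suc_Suc_le:
  assumes n: "n \<ge> 1" and m: "even (m - int n)"
  shows "sigma2 w n (Suc (Suc c)) m
    \<le> l2sq w * ennreal (2 * ln (6 * real n) / real n) * (SUP k\<in>{k. even (k - int n)}. sigma1 w n c k)"
proof -
  define I where "I = sigma2_index_set n"
  define L where "L = sigma2_index_lists n c"
  define W where "W ys k = ennreal (chain_weight w n ys k)" for ys k
  define E where "E k = ennreal (1 / \<bar>real_of_int (int n ^ 2 - k ^ 2)\<bar>)" for k
  define M where "M = (SUP k\<in>{k. even (k - int n)}. sigma1 w n c k)"
  have sum_j: "(\<Sum>\<^sub>\<infinity>j\<in>I. ennreal (rr w (m + j) * rr w (j + (ys @ [k]) ! 0))) \<le> l2sq w"
    if "k \<in> I" "ys \<in> L" for k ys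
    unfolding I_def using m
    by (rule infsum_sigma2_index_set_rr_mult_le_l2sq)
      (use that in \<open>cases ys, auto simp: I_def L_def sigma2_index_lists_def sigma2_index_set_def\<close>)
  have sum_ys: "(\<Sum>\<^sub>\<infinity>ys\<in>L. W ys k) \<le> M" if "k \<in> I" for k
    unfolding L_def W_def M_def using that
    by (intro order_trans[OF infsum_chain_weight_le_sigma1] SUP_upper)
      (simp add: I_def sigma2_index_set_def)
  have "sigma2 w n (Suc (Suc c)) m
      = infsum (\<lambda>((k, ys), j). ennreal (rr w (m + j) * rr w (j + (ys @ [k]) ! 0)) * (W ys k * E k))
          ((I \<times> L) \<times> I)"
    unfolding sigma2_Suc_Suc_eq I_def L_def W_def E_def ..
  also have "\<dots> \<le> infsum (\<lambda>(k, ys). \<Sum>\<^sub>\<infinity>j\<in>I.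
                    ennreal (rr w (m + j) * rr w (j + (ys @ [k]) ! 0)) * (W ys k * E k)) (I \<times> L)"
    by (rule order_trans[OF infsum_Sigma_le_ennreal]) (simp add: case_prod_beta')
  also have "\<dots> \<le> infsum (\<lambda>(k, ys). (\<Sum>\<^sub>\<infinity>j\<in>I. ennreal (rr w (m + j) * rr w (j + (ys @ [k]) ! 0)))
                                  * (W ys k * E k)) (I \<times> L)"
    by (intro infsum_mono) (auto intro: infsum_cmult_left_le_ennreal)
  also have "\<dots> \<le> infsum (\<lambda>(k, ys). l2sq w * (W ys k * E k)) (I \<times> L)"
    by (intro infsum_mono) (auto intro: mult_right_mono sum_j)
  also have "\<dots> \<le> (\<Sum>\<^sub>\<infinity>k\<in>I. \<Sum>\<^sub>\<infinity>ys\<in>L. W ys k * (l2sq w * E k))"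
    using infsum_Sigma_le_ennreal[of "\<lambda>(k, ys). l2sq w * (W ys k * E k)" I "\<lambda>_. L"]
    by (simp add: mult_ac)
  also have "\<dots> \<le> (\<Sum>\<^sub>\<infinity>k\<in>I. M * (l2sq w * E k))"
    by (intro infsum_mono order_trans[OF infsum_cmult_left_le_ennreal] mult_right_mono sum_ys) auto
  also have "\<dots> \<le> (\<Sum>\<^sub>\<infinity>k\<in>I. E k) * (M * l2sq w)"
    using infsum_cmult_left_le_ennreal[of E "M * l2sq w" I] by (simp add: mult_ac)
  also have "\<dots> \<le> ennreal (2 * ln (6 * real n) / real n) * (M * l2sq w)"
    using infsum_inverse_sq_diff_le[OF n] harm_div_le_log_bound[OF n]
    by (intro mult_right_mono) (auto simp: I_def E_def intro: order_trans ennreal_leI)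
  finally show ?thesis
    by (simp add: M_def mult_ac)
qed

theorem lemma4:
  fixes w :: "int \<Rightarrow> complex" and n :: nat and m :: int
  assumes l2: "(\<lambda>m. (cmod (w m))\<^sup>2) summable_on {m::int. even m}"
    and n: "n \<ge> 1"
    and m: "even (m - int n)"
  shows "sigma2 w n 2 m \<le> l2sq w * ennreal (2 * ln (6 * real n) / real n)
    \<and> (\<forall>s\<ge>3. sigma2 w n s m \<le> l2sq w * ennreal (2 * ln (6 * real n) / real n)
              * (SUP k\<in>{k::int. even (k - int n)}. sigma1 w n (s - 2) k))"
proof
  have "int n \<in> {k. even (k - int n)}"
    by simp
  then have "(SUP k\<in>{k::int. even (k - int n)}. sigma1 w n 0 k) = 1"
    unfolding sigma1_0 by (intro SUP_const) blast
  then show "sigma2 w n 2 m \<le> l2sq w * ennreal (2 * ln (6 * real n) / real n)"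
    using sigma2_Suc_Suc_le[OF n m, of w 0] by (simp add: numeral_2_eq_2)
next
  show "\<forall>s\<ge>3. sigma2 w n s m \<le> l2sq w * ennreal (2 * ln (6 * real n) / real n)
              * (SUP k\<in>{k::int. even (k - int n)}. sigma1 w n (s - 2) k)"
  proof (intro allI impI)
    fix s :: nat assume "s \<ge> 3"
    then have "s = Suc (Suc (s - 2))"
      by simp
    then show "sigma2 w n s m \<le> l2sq w * ennreal (2 * ln (6 * real n) / real n)
              * (SUP k\<in>{k::int. even (k - int n)}. sigma1 w n (s - 2) k)"
      using sigma2_Suc_Suc_le[OF n m, of w "s - 2"] by simp
  qed
qed

end
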